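(* Let $k,\lambda,\varepsilon>0$. For each $n\ge2$ let weights $\alpha_{1,n},\dots,\alpha_{n,n}>0$ with $\sum_{i=1}^n\alpha_{i,n}=1$ be given, and let $\alpha_{\min,n}$, $\alpha_{\max,n}$ be the smallest and largest of them. Let $P_n$ be the probability on $[0,\infty)^n$ with density $\lambda^n e^{-\lambda\|x\|_1}$, where $\|x\|_1=\sum_i x_i$. Then there exists $N=N(k,\varepsilon)$ such that for every $n\ge N$, $$P_n\left\{(1-\varepsilon)e^{-n\alpha_{\max,n}\gamma}<\frac{\prod_{i=1}^n x_i^{\alpha_{i,n}}}{\sum_{i=1}^n\alpha_{i,n}x_i}<(1+\varepsilon)e^{-n\alpha_{\min,n}\gamma}\right\}\ge1-\frac1{n^k}.$$
   Context: $\gamma$ denotes Euler's constant. *)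

theory Defs
  imports "HOL-Analysis.Analysis"
begin

definition P_exp :: "real \<Rightarrow> nat \<Rightarrow> (nat \<Rightarrow> real) measure" where
  "P_exp lam n = density (PiM {..<n} (\<lambda>_. lborel))
     (\<lambda>x. ennreal (if (\<forall>i<n. x i \<ge> 0) then lam ^ n * exp (- lam * (\<Sum>i<n. x i)) else 0))"

end

theory Submission
  imports Defs "HOL-Real_Asymp.Real_Asymp"
begin

text \<open>
  Let \<open>X\<^sub>1, ..., X\<^sub>n\<close> be independent exponential variables with rate \<open>\<lambda>\<close>, \<open>L = \<Sum> \<alpha>\<^sub>i ln X\<^sub>i\<close> and
  \<open>D = \<Sum> \<alpha>\<^sub>i X\<^sub>i\<close>; the ratio in the theorem is \<open>exp (L - ln D)\<close>.  Since \<open>E[ln X] = -\<gamma> - ln \<lambda>\<close> and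
  \<open>E[X] = 1/\<lambda>\<close>, the ratio concentrates around \<open>exp (-\<gamma>)\<close>, and the window of the theorem follows from
  four large-deviation events having exponentially small probability:
  \<^item> Upper half: by Jensen's inequality the ratio is at most
    \<open>exp (n \<alpha>\<^sub>m\<^sub>i\<^sub>n (mean of ln X\<^sub>i - ln (mean of X\<^sub>i)))\<close>, so it suffices that the geometric
    mean is not too large and the arithmetic mean not too small.
  \<^item> Lower half: it suffices that \<open>D\<close> is not too large and \<open>L\<close> not too small, with a margin
    \<open>\<gamma> (n \<alpha>\<^sub>m\<^sub>a\<^sub>x - 1) / 2\<close> that absorbs the variance of the weighted sums.
  Each event is bounded by a Chernoff (exponential Markov) bound for a product of independent
  coordinates, using the moments \<open>E[X powr p] = \<Gamma>(1 + p) / \<lambda> powr p\<close> and \<open>E[exp (a X)] = \<lambda> / (\<lambda> - a)\<close> and the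
  behaviour of \<open>\<Gamma>\<close> near \<open>1\<close> (\<open>(ln \<Gamma>)'(1) = -\<gamma>\<close>).
\<close>

definition exp_density :: "real \<Rightarrow> real \<Rightarrow> ennreal" where
  "exp_density lam t = ennreal (if 0 \<le> t then lam * exp (- lam * t) else 0)"

lemma exp_density_measurable [measurable]: "exp_density lam \<in> borel_measurable borel"
  unfolding exp_density_def by measurable

lemma nn_integral_exp_density_exp:
  assumes lam: "lam > 0" and a: "a < lam"
  shows "(\<integral>\<^sup>+t. exp_density lam t * ennreal (exp (a * t)) \<partial>lborel) = ennreal (lam / (lam - a))"
proof -
  have "((\<lambda>t. exp (- (lam - a) * t)) has_integral exp (- (lam - a) * 0) / (lam - a)) {0..}"
    using a by (intro has_integral_exp_minus_to_infinity) auto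
  hence "((\<lambda>t. lam * exp (- (lam - a) * t)) has_integral lam * (1 / (lam - a))) {0..}"
    by (intro has_integral_mult_right) simp
  hence "((\<lambda>t. if t \<in> {0..} then lam * exp (- (lam - a) * t) else 0) has_integral lam / (lam - a)) UNIV"
    by (subst has_integral_restrict_UNIV) simp
  hence "((\<lambda>t. if 0 \<le> t then lam * exp (- (lam - a) * t) else 0) has_integral lam / (lam - a)) UNIV"
    by simp
  hence "(\<integral>\<^sup>+t. ennreal (if 0 \<le> t then lam * exp (- (lam - a) * t) else 0) \<partial>lborel) = ennreal (lam / (lam - a))"
    using lam by (intro nn_integral_has_integral_lborel) auto
  moreover have "exp_density lam t * ennreal (exp (a * t)) = ennreal (if 0 \<le> t then lam * exp (- (lam - a) * t) else 0)" for t
    using lam by (auto simp: exp_density_def ennreal_mult'[symmetric] exp_add[symmetric] algebra_simps)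
  ultimately show ?thesis by simp
qed

lemma nn_integral_exp_density_one:
  assumes "lam > 0" shows "(\<integral>\<^sup>+t. exp_density lam t \<partial>lborel) = 1"
  using nn_integral_exp_density_exp[OF assms, of 0] assms by simp

lemma nn_integral_exp_density_exp_scaled:
  assumes lam: "lam > 0" and u: "u < 1"
  shows "(\<integral>\<^sup>+t. exp_density lam t * ennreal (exp (u * lam * t)) \<partial>lborel) = ennreal (1 / (1 - u))"
proof -
  have "lam - u * lam = lam * (1 - u)" by (simp add: algebra_simps)
  hence "lam / (lam - u * lam) = 1 / (1 - u)" using lam u by simp
  moreover have "u * lam < lam" using lam u by simp
  ultimately show ?thesis using nn_integral_exp_density_exp[OF lam, of "u * lam"] by simp
qed

lemma nn_integral_exp_density_nonpos:
  "(\<integral>\<^sup>+t. exp_density lam t * indicator {..0} t \<partial>lborel) = 0"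
proof -
  have "exp_density lam t * indicator {..0} t = ennreal lam * indicator {0} t" for t
    by (auto simp: exp_density_def indicator_def)
  thus ?thesis by (simp add: nn_integral_cmult_indicator)
qed

lemma nn_integral_exp_density_powr:
  assumes p: "p > -1" and lam: "lam > 0"
  shows "(\<integral>\<^sup>+t. exp_density lam t * ennreal (t powr p) \<partial>lborel) = ennreal (Gamma (p + 1) / lam powr p)"
proof -
  define f where "f t = exp_density lam t * ennreal (t powr p)" for t
  have [measurable]: "f \<in> borel_measurable borel" unfolding f_def by measurable
  have "((\<lambda>t. t powr (p + 1 - 1) / exp t) has_integral Gamma (p + 1)) {0..}"
    using Gamma_integral_real[of "p + 1"] p by simp
  hence "((\<lambda>t. exp (- t) * t powr p) has_integral Gamma (p + 1)) {0..}"
    by (simp add: exp_minus field_simps)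
  hence "((\<lambda>t. if t \<in> {0..} then exp (- t) * t powr p else 0) has_integral Gamma (p + 1)) UNIV"
    by (subst has_integral_restrict_UNIV)
  hence "((\<lambda>t. if 0 \<le> t then exp (- t) * t powr p else 0) has_integral Gamma (p + 1)) UNIV"
    by simp
  hence Gamma: "(\<integral>\<^sup>+t. ennreal (if 0 \<le> t then exp (- t) * t powr p else 0) \<partial>lborel) = ennreal (Gamma (p + 1))"
    by (intro nn_integral_has_integral_lborel) auto
  have scale: "f (0 + (1 / lam) * t) = ennreal (lam / lam powr p) * ennreal (if 0 \<le> t then exp (- t) * t powr p else 0)" for t
    using lam by (auto simp: f_def exp_density_def ennreal_mult'[symmetric] powr_divide zero_le_divide_iff field_simps)
  have "(\<integral>\<^sup>+t. f t \<partial>lborel) = \<bar>1 / lam\<bar> * (\<integral>\<^sup>+t. f (0 + (1 / lam) * t) \<partial>lborel)"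
    by (rule nn_integral_real_affine) (use lam in auto)
  also have "\<dots> = ennreal (1 / lam) * (ennreal (lam / lam powr p) * ennreal (Gamma (p + 1)))"
    using lam by (simp only: scale, subst nn_integral_cmult) (auto simp: Gamma)
  also have "\<dots> = ennreal (Gamma (p + 1) / lam powr p)"
    using lam p by (simp add: ennreal_mult'[symmetric] field_simps)
  finally show ?thesis unfolding f_def .
qed

lemma exp_density_powr_moment_le:
  fixes lam p c :: real
  assumes lam: "lam > 0" and p: "p > -1" and Gamma: "Gamma (1 + p) \<le> exp (c * p)"
  shows "0 \<le> Gamma (p + 1) / lam powr p \<and> Gamma (p + 1) / lam powr p \<le> exp (p * (c - ln lam))"
proof
  have "Gamma (p + 1) > 0" using p by (intro Gamma_real_pos) simp
  thus "0 \<le> Gamma (p + 1) / lam powr p" by simp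
  have "Gamma (p + 1) / lam powr p = Gamma (1 + p) / exp (p * ln lam)"
    using lam by (simp add: powr_def add.commute)
  also have "\<dots> \<le> exp (c * p) / exp (p * ln lam)" using Gamma by (intro divide_right_mono) auto
  also have "\<dots> = exp (p * (c - ln lam))" by (simp add: exp_diff algebra_simps)
  finally show "Gamma (p + 1) / lam powr p \<le> exp (p * (c - ln lam))" .
qed

lemma P_exp_density_prod:
  assumes lam: "lam > 0"
  shows "ennreal (if (\<forall>i<n. x i \<ge> 0) then lam ^ n * exp (- lam * (\<Sum>i<n. x i)) else 0)
     = (\<Prod>i<n. exp_density lam (x i))"
proof (cases "\<forall>i<n. x i \<ge> 0")
  case True
  have "lam ^ n * exp (- lam * (\<Sum>i<n. x i)) = (\<Prod>i<n. lam * exp (- lam * x i))"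
    by (simp add: prod.distrib exp_sum[symmetric] sum_distrib_left sum_negf)
  thus ?thesis using True lam by (simp add: exp_density_def prod_ennreal[symmetric])
next
  case False
  then obtain i where "i < n" "x i < 0" by auto
  hence "(\<Prod>i<n. exp_density lam (x i)) = 0"
    by (intro prod_zero) (auto simp: exp_density_def intro!: bexI[of _ i])
  thus ?thesis by (subst if_not_P[OF False]) simp
qed

lemma sets_P_exp [measurable_cong]: "sets (P_exp lam n) = sets (PiM {..<n} (\<lambda>_. lborel))"
  unfolding P_exp_def by simp

lemma nn_integral_P_exp_prod:
  assumes lam: "lam > 0" and [measurable]: "\<And>i. f i \<in> borel_measurable borel"
  shows "(\<integral>\<^sup>+x. (\<Prod>i<n. f i (x i)) \<partial>P_exp lam n) = (\<Prod>i<n. \<integral>\<^sup>+t. exp_density lam t * f i t \<partial>lborel)"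
proof -
  have "(\<integral>\<^sup>+x. (\<Prod>i<n. f i (x i)) \<partial>P_exp lam n)
      = (\<integral>\<^sup>+x. (\<Prod>i<n. exp_density lam (x i)) * (\<Prod>i<n. f i (x i)) \<partial>PiM {..<n} (\<lambda>_. lborel))"
    unfolding P_exp_def by (subst nn_integral_density) (auto simp: P_exp_density_prod[OF lam])
  also have "\<dots> = (\<Prod>i<n. \<integral>\<^sup>+t. exp_density lam t * f i t \<partial>lborel)"
    unfolding prod.distrib[symmetric]
    by (rule product_sigma_finite.product_nn_integral_prod)
       (auto simp: product_sigma_finite_def lborel.sigma_finite_measure_axioms)
  finally show ?thesis .
qed

lemma emeasure_space_P_exp:
  assumes "lam > 0" shows "emeasure (P_exp lam n) (space (P_exp lam n)) = 1"
  using nn_integral_P_exp_prod[OF assms, of "\<lambda>_ _. 1" n] nn_integral_exp_density_one[OF assms] by simp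

lemma finite_measure_P_exp: "lam > 0 \<Longrightarrow> finite_measure (P_exp lam n)"
  by (rule finite_measureI) (simp add: emeasure_space_P_exp)

lemma P_exp_prod_tail:
  fixes f :: "nat \<Rightarrow> real \<Rightarrow> real"
  assumes lam: "lam > 0" and a: "a > 0"
    and [measurable]: "\<And>i. f i \<in> borel_measurable borel" and f_nonneg: "\<And>i t. 0 \<le> f i t"
    and moments: "\<And>i. i < n \<Longrightarrow> (\<integral>\<^sup>+t. exp_density lam t * ennreal (f i t) \<partial>lborel) = ennreal (r i)"
    and r_nonneg: "\<And>i. i < n \<Longrightarrow> r i \<ge> 0"
    and event: "A \<subseteq> {x \<in> space (P_exp lam n). a \<le> (\<Prod>i<n. f i (x i))}"
  shows "measure (P_exp lam n) A \<le> (\<Prod>i<n. r i) / a"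
proof -
  let ?F = "\<lambda>x. \<Prod>i<n. ennreal (f i (x i))"
  interpret finite_measure "P_exp lam n" by (rule finite_measure_P_exp[OF lam])
  have "ennreal (1 / a) * ?F x = ennreal ((\<Prod>i<n. f i (x i)) / a)" for x
    using a f_nonneg by (simp add: prod_ennreal prod_nonneg ennreal_mult'[symmetric])
  hence "emeasure (P_exp lam n) {x \<in> space (P_exp lam n). a \<le> (\<Prod>i<n. f i (x i))}
      = emeasure (P_exp lam n) {x \<in> space (P_exp lam n). 1 \<le> ennreal (1 / a) * ?F x}"
    using a by (intro arg_cong[where f = "emeasure _"]) (auto simp: le_divide_eq_1_pos)
  also have "\<dots> \<le> ennreal (1 / a) * (\<integral>\<^sup>+x. ?F x * indicator (space (P_exp lam n)) x \<partial>P_exp lam n)"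
    by (rule nn_integral_Markov_inequality) measurable
  also have "(\<integral>\<^sup>+x. ?F x * indicator (space (P_exp lam n)) x \<partial>P_exp lam n) = (\<integral>\<^sup>+x. ?F x \<partial>P_exp lam n)"
    by (intro nn_integral_cong) auto
  also have "\<dots> = (\<Prod>i<n. ennreal (r i))"
    using nn_integral_P_exp_prod[OF lam, of "\<lambda>i t. ennreal (f i t)"] by (simp add: moments)
  also have "\<dots> = ennreal (\<Prod>i<n. r i)"
    using r_nonneg by (intro prod_ennreal) auto
  also have "ennreal (1 / a) * ennreal (\<Prod>i<n. r i) = ennreal ((\<Prod>i<n. r i) / a)"
    using a r_nonneg by (simp add: prod_nonneg ennreal_mult'[symmetric])
  finally have "measure (P_exp lam n) {x \<in> space (P_exp lam n). a \<le> (\<Prod>i<n. f i (x i))} \<le> (\<Prod>i<n. r i) / a"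
    unfolding measure_def by (intro enn2real_leI) (use a r_nonneg in \<open>auto intro!: divide_nonneg_pos prod_nonneg\<close>)
  moreover have "{x \<in> space (P_exp lam n). a \<le> (\<Prod>i<n. f i (x i))} \<in> sets (P_exp lam n)"
    by measurable
  ultimately show ?thesis using finite_measure_mono[OF event] by linarith
qed

lemma P_exp_nonpos_null:
  assumes lam: "lam > 0"
  shows "measure (P_exp lam n) {x \<in> space (P_exp lam n). \<exists>i<n. x i \<le> 0} = 0"
proof -
  let ?P = "P_exp lam n"
  interpret finite_measure ?P by (rule finite_measure_P_exp[OF lam])
  have coord: "measure ?P {x \<in> space ?P. x i \<le> 0} \<le> 0" if "i < n" for i
  proof -
    have "measure ?P {x \<in> space ?P. x i \<le> 0} \<le> (\<Prod>j<n. if j = i then 0 else 1) / 1"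
      by (rule P_exp_prod_tail[OF lam, of 1 "\<lambda>j t. if j = i then indicator {..0} t else 1"])
         (use that in \<open>auto simp: prod.delta ennreal_indicator nn_integral_exp_density_nonpos
                                   nn_integral_exp_density_one[OF lam]\<close>)
    thus ?thesis using that by (simp add: prod.delta)
  qed
  have coord_sets: "{x \<in> space ?P. x i \<le> 0} \<in> sets ?P" if "i \<in> {..<n}" for i
    using that by measurable
  have "{x \<in> space ?P. \<exists>i<n. x i \<le> 0} = (\<Union>i<n. {x \<in> space ?P. x i \<le> 0})" by auto
  hence "measure ?P {x \<in> space ?P. \<exists>i<n. x i \<le> 0} \<le> (\<Sum>i<n. measure ?P {x \<in> space ?P. x i \<le> 0})"
    by (simp only:) (intro finite_measure_subadditive_finite finite_lessThan image_subsetI coord_sets)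
  also have "\<dots> \<le> 0" using coord by (intro sum_nonpos) auto
  finally show ?thesis by (simp add: measure_le_0_iff)
qed

text \<open>This is how the first-order behaviour of \<open>Gamma\<close> at \<open>1\<close> is turned into usable inequalities.\<close>
lemma below_slope_near_zero:
  fixes f :: "real \<Rightarrow> real"
  assumes "(f has_real_derivative d) (at 0)" "f 0 = 0" "d < m" "r > 0"
  shows "\<exists>s. 0 < s \<and> s \<le> r \<and> f s \<le> m * s"
proof -
  have "((\<lambda>h. (f (0 + h) - f 0) / h) \<longlongrightarrow> d) (at 0)"
    using assms(1) by (simp add: DERIV_def)
  hence "((\<lambda>h. f h / h) \<longlongrightarrow> d) (at_right 0)"
    using assms(2) by (simp add: filterlim_at_split)
  hence "eventually (\<lambda>h. f h / h < m) (at_right 0)"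
    using assms(3) by (intro order_tendstoD) auto
  moreover have "eventually (\<lambda>h. 0 < h \<and> h \<le> r) (at_right (0::real))"
    using assms(4) by (auto simp: eventually_at_right_field intro!: exI[of _ r])
  ultimately have "eventually (\<lambda>h. f h / h < m \<and> 0 < h \<and> h \<le> r) (at_right (0::real))"
    by eventually_elim auto
  from eventually_happens[OF this] obtain h where "f h / h < m" "0 < h" "h \<le> r"
    using trivial_limit_at_right_real by blast
  thus ?thesis by (intro exI[of _ h]) (auto simp: field_simps)
qed

text \<open>Since \<open>(ln \<circ> Gamma)' 1 = -\<gamma>\<close>, \<open>Gamma (1 + s) \<le> exp ((-\<gamma> + \<delta>) s)\<close> for some small \<open>s > 0\<close>.\<close>
lemma Gamma_right_of_one:
  fixes \<delta> :: real assumes "\<delta> > 0"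
  shows "\<exists>s>0. Gamma (1 + s) \<le> exp ((- euler_mascheroni + \<delta>) * s)"
proof -
  have "((\<lambda>s. ln_Gamma (1 + s)) has_real_derivative Digamma (1 + 0) * (0 + 1)) (at (0::real))"
    by (intro derivative_eq_intros) auto
  hence "((\<lambda>s. ln_Gamma (1 + s)) has_real_derivative - euler_mascheroni) (at (0::real))" by simp
  from below_slope_near_zero[OF this _ _ zero_less_one, of "- euler_mascheroni + \<delta>"] assms
  obtain s where s: "0 < s" "ln_Gamma (1 + s) \<le> (- euler_mascheroni + \<delta>) * s"
    by (auto simp: ln_Gamma_real_pos)
  have "Gamma (1 + s) = exp (ln_Gamma (1 + s))"
    using s by (simp add: ln_Gamma_real_pos)
  also have "\<dots> \<le> exp ((- euler_mascheroni + \<delta>) * s)" using s by simp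
  finally show ?thesis using s by blast
qed

text \<open>Symmetrically, \<open>Gamma (1 - u) \<le> exp ((\<gamma> + \<delta>) u)\<close> on a whole interval \<open>0 \<le> u \<le> s\<close>; the
  extension from the endpoint \<open>s\<close> to the interval uses log-convexity of \<open>Gamma\<close>.\<close>
lemma Gamma_left_of_one:
  fixes \<delta> :: real assumes "\<delta> > 0"
  shows "\<exists>s. 0 < s \<and> s \<le> 1/2 \<and> (\<forall>u. 0 \<le> u \<and> u \<le> s \<longrightarrow> Gamma (1 - u) \<le> exp ((euler_mascheroni + \<delta>) * u))"
proof -
  have "((\<lambda>s. ln_Gamma (1 - s)) has_real_derivative Digamma (1 - 0) * (0 - 1)) (at (0::real))"
    by (intro derivative_eq_intros) auto
  hence "((\<lambda>s. ln_Gamma (1 - s)) has_real_derivative euler_mascheroni) (at (0::real))" by simp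
  from below_slope_near_zero[OF this, of "euler_mascheroni + \<delta>" "1/2"] assms
  obtain s where s: "0 < s" "s \<le> 1/2" "ln_Gamma (1 - s) \<le> (euler_mascheroni + \<delta>) * s"
    by (auto simp: ln_Gamma_real_pos)
  have "Gamma (1 - u) \<le> exp ((euler_mascheroni + \<delta>) * u)" if u: "0 \<le> u" "u \<le> s" for u
  proof -
    define t where "t = u / s"
    have t: "0 \<le> t" "t \<le> 1" using u s by (auto simp: t_def field_simps)
    have convex: "(ln \<circ> Gamma) ((1 - t) *\<^sub>R 1 + t *\<^sub>R (1 - s)) \<le> (1 - t) * (ln \<circ> Gamma) 1 + t * (ln \<circ> Gamma) (1 - s)"
      by (rule convex_onD[OF log_convex_Gamma_real t]) (use s in auto)
    have point: "(1 - t) *\<^sub>R (1::real) + t *\<^sub>R (1 - s) = 1 - u" using s by (simp add: t_def field_simps)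
    have "ln (Gamma (1 - s)) = ln_Gamma (1 - s)" using s by (simp add: ln_Gamma_real_pos)
    with convex have "ln (Gamma (1 - u)) \<le> t * ln_Gamma (1 - s)" unfolding point by simp
    also have "\<dots> \<le> t * ((euler_mascheroni + \<delta>) * s)" using t s by (intro mult_left_mono) auto
    also have "\<dots> = (euler_mascheroni + \<delta>) * u" using s by (simp add: t_def field_simps)
    finally have "exp (ln (Gamma (1 - u))) \<le> exp ((euler_mascheroni + \<delta>) * u)" by simp
    thus ?thesis using u s by simp
  qed
  thus ?thesis using s by blast
qed

text \<open>For \<open>0 < \<beta> < 1\<close>, \<open>exp (t \<beta>) / (1 + t) \<le> exp (- (1 - \<beta>) t / 2)\<close> for some \<open>t > 0\<close>
  (the derivative of \<open>t \<beta> - ln (1 + t)\<close> at \<open>0\<close> is \<open>\<beta> - 1 < 0\<close>).\<close>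
lemma exp_over_one_plus_small:
  fixes \<beta> :: real assumes "0 < \<beta>" "\<beta> < 1"
  shows "\<exists>t>0. exp (t * \<beta>) / (1 + t) \<le> exp (- ((1 - \<beta>) / 2) * t)"
proof -
  have "((\<lambda>t. t * \<beta> - ln (1 + t)) has_real_derivative 1 * \<beta> - 1 / (1 + 0) * (0 + 1)) (at (0::real))"
    by (intro derivative_eq_intros) auto
  hence "((\<lambda>t. t * \<beta> - ln (1 + t)) has_real_derivative \<beta> - 1) (at (0::real))" by simp
  from below_slope_near_zero[OF this _ _ zero_less_one, of "- ((1 - \<beta>) / 2)"] assms
  obtain t where t: "0 < t" "t * \<beta> - ln (1 + t) \<le> - ((1 - \<beta>) / 2) * t"
    by (auto simp: field_simps)
  have "exp (t * \<beta>) / (1 + t) = exp (t * \<beta> - ln (1 + t))" using t by (simp add: exp_diff)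
  also have "\<dots> \<le> exp (- ((1 - \<beta>) / 2) * t)" using t by simp
  finally show ?thesis using t by blast
qed

text \<open>\<open>1 / (1 - u) \<le> exp (u / (1 - \<tau>))\<close> for \<open>0 \<le> u \<le> \<tau> < 1\<close> (from \<open>ln y \<le> y - 1\<close>): bounds the
  moment generating function of the exponential distribution.\<close>
lemma inverse_one_minus_le_exp:
  fixes u \<tau> :: real assumes "0 \<le> u" "u \<le> \<tau>" "\<tau> < 1"
  shows "1 / (1 - u) \<le> exp (u / (1 - \<tau>))"
proof -
  have "ln (1 / (1 - u)) \<le> 1 / (1 - u) - 1" using assms by (intro ln_le_minus_one) auto
  also have "\<dots> = u / (1 - u)" using assms by (simp add: field_simps)
  also have "\<dots> \<le> u / (1 - \<tau>)" using assms by (intro divide_left_mono) auto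
  finally have "exp (ln (1 / (1 - u))) \<le> exp (u / (1 - \<tau>))" by simp
  thus ?thesis using assms by simp
qed

lemma prod_le_exp_sum:
  fixes f g :: "'a \<Rightarrow> real"
  assumes "\<And>i. i \<in> I \<Longrightarrow> 0 \<le> f i \<and> f i \<le> exp (g i)"
  shows "(\<Prod>i\<in>I. f i) \<le> exp (\<Sum>i\<in>I. g i)"
proof (cases "finite I")
  case True
  have "(\<Prod>i\<in>I. f i) \<le> (\<Prod>i\<in>I. exp (g i))" using assms by (intro prod_mono) auto
  also have "\<dots> = exp (\<Sum>i\<in>I. g i)" using True by (rule exp_sum[symmetric])
  finally show ?thesis .
qed simp

lemma prod_powr_eq_exp_sum:
  fixes x a :: "nat \<Rightarrow> real" and n :: nat
  assumes "\<And>i. i < n \<Longrightarrow> x i > (0::real)"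
  shows "(\<Prod>i<n. x i powr a i) = exp (\<Sum>i<n. a i * ln (x i))"
proof -
  have "(\<Prod>i<n. x i powr a i) = (\<Prod>i<n. exp (a i * ln (x i)))"
  proof (intro prod.cong refl)
    fix i assume "i \<in> {..<n}"
    thus "x i powr a i = exp (a i * ln (x i))" using assms[of i] by (simp add: powr_def)
  qed
  also have "\<dots> = exp (\<Sum>i<n. a i * ln (x i))" by (simp add: exp_sum)
  finally show ?thesis .
qed

lemma weights_min_le:
  fixes \<alpha> :: "nat \<Rightarrow> real" assumes "(\<Sum>i<n. \<alpha> i) = 1"
  shows "real n * Min (\<alpha> ` {..<n}) \<le> 1"
proof -
  have "(\<Sum>i<n. Min (\<alpha> ` {..<n})) \<le> (\<Sum>i<n. \<alpha> i)" by (intro sum_mono Min_le) auto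
  thus ?thesis using assms by simp
qed

lemma weights_max_ge:
  fixes \<alpha> :: "nat \<Rightarrow> real" assumes "(\<Sum>i<n. \<alpha> i) = 1"
  shows "real n * Max (\<alpha> ` {..<n}) \<ge> 1"
proof -
  have "(\<Sum>i<n. \<alpha> i) \<le> (\<Sum>i<n. Max (\<alpha> ` {..<n}))" by (intro sum_mono Max_ge) auto
  thus ?thesis using assms by simp
qed

text \<open>Deterministic upper bound: splitting off the uniform part \<open>c/n\<close> of every weight, where
  \<open>c = n \<alpha>\<^sub>m\<^sub>i\<^sub>n\<close>, and applying Jensen's inequality for the concave \<open>ln\<close> to the remaining weights
  together with the weight \<open>c\<close> at the arithmetic mean, the ratio is at most
  \<open>exp (c (mean of ln x\<^sub>i - ln (mean of x\<^sub>i)))\<close>.\<close>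
lemma ratio_le_exp_mean_gap:
  fixes x \<alpha> :: "nat \<Rightarrow> real"
  assumes n: "n > 0" and \<alpha>_pos: "\<And>i. i < n \<Longrightarrow> \<alpha> i > 0" and x_pos: "\<And>i. i < n \<Longrightarrow> x i > 0"
    and \<alpha>_sum: "(\<Sum>i<n. \<alpha> i) = 1"
  shows "(\<Prod>i<n. x i powr \<alpha> i) / (\<Sum>i<n. \<alpha> i * x i)
     \<le> exp (real n * Min (\<alpha> ` {..<n}) * ((\<Sum>i<n. ln (x i)) / n - ln ((\<Sum>i<n. x i) / n)))"
proof -
  define c where "c = real n * Min (\<alpha> ` {..<n})"
  define z where "z = (\<Sum>i<n. x i) / n"
  define w where "w j = (if j = n then c else \<alpha> j - c / n)" for j
  define y where "y j = (if j = n then z else x j)" for j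
  have split: "(\<Sum>j<Suc n. f j) = (\<Sum>i<n. g i) + f n" if "\<And>i. i < n \<Longrightarrow> f i = g i" for f g :: "nat \<Rightarrow> real"
    using that by simp
  have "Min (\<alpha> ` {..<n}) > 0" using n \<alpha>_pos by (subst Min_gr_iff) auto
  hence c_nonneg: "c \<ge> 0" unfolding c_def by simp
  have w_nonneg: "w j \<ge> 0" if "j \<in> {..<Suc n}" for j
  proof -
    have "j < n \<Longrightarrow> Min (\<alpha> ` {..<n}) \<le> \<alpha> j" by (intro Min_le) auto
    thus ?thesis using that n c_nonneg by (auto simp: w_def c_def less_Suc_eq)
  qed
  have z_pos: "z > 0" unfolding z_def using n x_pos by (intro divide_pos_pos sum_pos) auto
  have "(\<Sum>j<Suc n. w j) = 1"
    using n \<alpha>_sum by (subst split[of _ "\<lambda>i. \<alpha> i - c / n"]) (auto simp: w_def sum_subtractf)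
  hence Jensen: "(\<Sum>j<Suc n. w j * ln (y j)) \<le> ln (\<Sum>j<Suc n. w j *\<^sub>R y j)"
    using w_nonneg z_pos x_pos
    by (intro concave_on_sum[OF _ _ ln_concave]) (auto simp: y_def less_Suc_eq)
  have mean: "(\<Sum>j<Suc n. w j *\<^sub>R y j) = (\<Sum>i<n. \<alpha> i * x i)"
    using n by (subst split[of _ "\<lambda>i. (\<alpha> i - c / n) * x i"])
               (auto simp: w_def y_def z_def algebra_simps sum_subtractf sum_distrib_left sum_divide_distrib)
  have logs: "(\<Sum>j<Suc n. w j * ln (y j)) = (\<Sum>i<n. \<alpha> i * ln (x i)) - c * ((\<Sum>i<n. ln (x i)) / n - ln z)"
    using n by (subst split[of _ "\<lambda>i. (\<alpha> i - c / n) * ln (x i)"])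
               (auto simp: w_def y_def algebra_simps sum_subtractf sum_distrib_left sum_divide_distrib)
  have D_pos: "(\<Sum>i<n. \<alpha> i * x i) > 0" using n \<alpha>_pos x_pos by (intro sum_pos) auto
  have "(\<Prod>i<n. x i powr \<alpha> i) / (\<Sum>i<n. \<alpha> i * x i) = exp ((\<Sum>i<n. \<alpha> i * ln (x i)) - ln (\<Sum>i<n. \<alpha> i * x i))"
    using D_pos by (simp add: prod_powr_eq_exp_sum[OF x_pos] exp_diff)
  also have "\<dots> \<le> exp (c * ((\<Sum>i<n. ln (x i)) / n - ln z))"
    using Jensen unfolding mean logs by simp
  finally show ?thesis unfolding c_def z_def .
qed

lemma ratio_upper_bound:
  fixes x \<alpha> :: "nat \<Rightarrow> real" and lam \<eta> :: real
  assumes n: "n > 0" and \<alpha>_pos: "\<And>i. i < n \<Longrightarrow> \<alpha> i > 0" and x_pos: "\<And>i. i < n \<Longrightarrow> x i > 0"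
    and \<alpha>_sum: "(\<Sum>i<n. \<alpha> i) = 1" and lam: "lam > 0" and \<eta>: "\<eta> \<ge> 0"
    and geo: "(\<Sum>i<n. ln (x i)) < real n * (\<eta> / 2 - euler_mascheroni - ln lam)"
    and arith: "real n * exp (- \<eta> / 2) < lam * (\<Sum>i<n. x i)"
  shows "(\<Prod>i<n. x i powr \<alpha> i) / (\<Sum>i<n. \<alpha> i * x i) < exp \<eta> * exp (- real n * Min (\<alpha> ` {..<n}) * euler_mascheroni)"
proof -
  define c where "c = real n * Min (\<alpha> ` {..<n})"
  have "Min (\<alpha> ` {..<n}) > 0" using n \<alpha>_pos by (subst Min_gr_iff) auto
  hence c: "0 < c" "c \<le> 1" using n weights_min_le[OF \<alpha>_sum] unfolding c_def by auto
  have A_pos: "(\<Sum>i<n. x i) / n > 0" using n x_pos by (intro divide_pos_pos sum_pos) auto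
  have "(\<Sum>i<n. ln (x i)) / n < \<eta> / 2 - euler_mascheroni - ln lam"
    using n geo by (simp add: divide_less_eq mult.commute)
  moreover have "- \<eta> / 2 < ln lam + ln ((\<Sum>i<n. x i) / n)"
  proof -
    have "exp (- \<eta> / 2) < lam * ((\<Sum>i<n. x i) / n)" using n arith by (simp add: field_simps)
    moreover have "lam * ((\<Sum>i<n. x i) / n) > 0" using lam A_pos by (rule mult_pos_pos)
    ultimately have "ln (exp (- \<eta> / 2)) < ln (lam * ((\<Sum>i<n. x i) / n))"
      by (simp only: ln_less_cancel_iff[OF exp_gt_zero])
    thus ?thesis using ln_mult_pos[OF lam A_pos] by simp
  qed
  ultimately have gap: "(\<Sum>i<n. ln (x i)) / n - ln ((\<Sum>i<n. x i) / n) < \<eta> - euler_mascheroni" by linarith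
  have "(\<Prod>i<n. x i powr \<alpha> i) / (\<Sum>i<n. \<alpha> i * x i) \<le> exp (c * ((\<Sum>i<n. ln (x i)) / n - ln ((\<Sum>i<n. x i) / n)))"
    unfolding c_def by (rule ratio_le_exp_mean_gap[OF n \<alpha>_pos x_pos \<alpha>_sum])
  also have "\<dots> < exp (c * (\<eta> - euler_mascheroni))" using gap c by simp
  also have "\<dots> \<le> exp (\<eta> - c * euler_mascheroni)"
    using c \<eta> mult_right_mono[OF c(2) \<eta>] by (simp add: algebra_simps)
  finally show ?thesis by (simp add: c_def exp_diff exp_minus field_simps)
qed

lemma ratio_lower_bound:
  fixes x \<alpha> :: "nat \<Rightarrow> real" and lam \<theta> :: real and n :: nat
  defines "M \<equiv> real n * Max (\<alpha> ` {..<n})"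
  assumes n: "n > 0" and \<alpha>_pos: "\<And>i. i < n \<Longrightarrow> \<alpha> i > 0" and x_pos: "\<And>i. i < n \<Longrightarrow> x i > 0"
    and lam: "lam > 0"
    and weighted_mean: "lam * (\<Sum>i<n. \<alpha> i * x i) < exp (\<theta> / 2 + euler_mascheroni * (M - 1) / 2)"
    and weighted_log: "- \<theta> / 2 - euler_mascheroni * (M + 1) / 2 - ln lam < (\<Sum>i<n. \<alpha> i * ln (x i))"
  shows "exp (- \<theta>) * exp (- real n * Max (\<alpha> ` {..<n}) * euler_mascheroni) < (\<Prod>i<n. x i powr \<alpha> i) / (\<Sum>i<n. \<alpha> i * x i)"
proof -
  have D_pos: "(\<Sum>i<n. \<alpha> i * x i) > 0" using n \<alpha>_pos x_pos by (intro sum_pos) auto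
  have "ln (lam * (\<Sum>i<n. \<alpha> i * x i)) < ln (exp (\<theta> / 2 + euler_mascheroni * (M - 1) / 2))"
    using weighted_mean lam D_pos by (subst ln_less_cancel_iff) auto
  hence "ln lam + ln (\<Sum>i<n. \<alpha> i * x i) < \<theta> / 2 + euler_mascheroni * (M - 1) / 2"
    using lam D_pos by (simp add: ln_mult_pos)
  hence "- \<theta> - M * euler_mascheroni < (\<Sum>i<n. \<alpha> i * ln (x i)) - ln (\<Sum>i<n. \<alpha> i * x i)"
    using weighted_log by (simp add: field_simps)
  hence "exp (- \<theta> - M * euler_mascheroni) < exp ((\<Sum>i<n. \<alpha> i * ln (x i)) - ln (\<Sum>i<n. \<alpha> i * x i))"
    by simp
  thus ?thesis using D_pos by (simp add: M_def prod_powr_eq_exp_sum[OF x_pos] exp_diff exp_minus field_simps)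
qed

lemma div_exp_le_exp:
  fixes p u v w :: real
  assumes "p \<le> exp u" "u - v \<le> w"
  shows "p / exp v \<le> exp w"
proof -
  have "p / exp v \<le> exp u / exp v" using assms(1) by (intro divide_right_mono) auto
  also have "\<dots> = exp (u - v)" by (simp add: exp_diff)
  also have "\<dots> \<le> exp w" using assms(2) by simp
  finally show ?thesis .
qed

text \<open>For the weighted statistics the Chernoff parameter is \<open>s = c n / M\<close> with \<open>M = n \<alpha>\<^sub>m\<^sub>a\<^sub>x \<ge> 1\<close>:
  every \<open>s \<alpha>\<^sub>i\<close> stays below \<open>c\<close> (keeping the moments finite), while \<open>s M = c n\<close>.\<close>
lemma scaled_weights:
  fixes \<alpha> :: "nat \<Rightarrow> real" and c :: real and n :: nat
  defines "M \<equiv> real n * Max (\<alpha> ` {..<n})"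
  assumes \<alpha>_pos: "\<And>i. i < n \<Longrightarrow> \<alpha> i > 0" and \<alpha>_sum: "(\<Sum>i<n. \<alpha> i) = 1" and c: "c > 0"
  shows "c * n / M > 0" and "c * n / M * M = c * n"
    and "\<And>i. i < n \<Longrightarrow> 0 \<le> c * n / M * \<alpha> i \<and> c * n / M * \<alpha> i \<le> c"
proof -
  have M: "M \<ge> 1" unfolding M_def by (rule weights_max_ge[OF \<alpha>_sum])
  have n: "n > 0" using \<alpha>_sum by (cases n) auto
  show "c * n / M > 0" using M n c by simp
  show "c * n / M * M = c * n" using M by simp
  fix i assume i: "i < n"
  have "real n * \<alpha> i \<le> M" unfolding M_def using i by (intro mult_left_mono Max_ge) auto
  hence "c * (real n * \<alpha> i) / M \<le> c * M / M" using c M by (intro divide_right_mono mult_left_mono) auto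
  thus "0 \<le> c * n / M * \<alpha> i \<and> c * n / M * \<alpha> i \<le> c" using M c \<alpha>_pos[OF i] by simp
qed

lemma spread_rate:
  fixes s c d M :: real and n :: nat
  assumes s: "s > 0" and d: "d > 0" and M: "M \<ge> 1" and sM: "s * M = c * n"
  shows "- (s * (d + euler_mascheroni * (M - 1) / 2)) \<le> - (c * min d (euler_mascheroni / 2)) * n"
proof -
  have "min d (euler_mascheroni / 2) * M = min d (euler_mascheroni / 2) + min d (euler_mascheroni / 2) * (M - 1)"
    by (simp add: algebra_simps)
  also have "\<dots> \<le> d + (euler_mascheroni / 2) * (M - 1)"
    using d M by (intro add_mono mult_right_mono) auto
  finally have "s * (min d (euler_mascheroni / 2) * M) \<le> s * (d + euler_mascheroni * (M - 1) / 2)"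
    using s by (intro mult_left_mono) auto
  moreover have "s * (min d (euler_mascheroni / 2) * M) = c * min d (euler_mascheroni / 2) * n"
    using sM by (metis mult.assoc mult.commute)
  ultimately show ?thesis by simp
qed

text \<open>Margins are \<open>\<eta>/2\<close> (for the
  upper half of the window) and \<open>\<theta>/2\<close> (for the lower half); \<open>E[ln X] = -\<gamma> - ln \<lambda>\<close> and
  \<open>E[X] = 1/\<lambda>\<close> for an exponential variable \<open>X\<close> with rate \<open>\<lambda>\<close>.\<close>
definition geo_mean_high :: "real \<Rightarrow> real \<Rightarrow> nat \<Rightarrow> (nat \<Rightarrow> real) set" where
  "geo_mean_high \<eta> lam n = {x \<in> space (P_exp lam n). (\<forall>i<n. 0 < x i) \<and>
     real n * (\<eta> / 2 - euler_mascheroni - ln lam) \<le> (\<Sum>i<n. ln (x i))}"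

definition arith_mean_low :: "real \<Rightarrow> real \<Rightarrow> nat \<Rightarrow> (nat \<Rightarrow> real) set" where
  "arith_mean_low \<eta> lam n = {x \<in> space (P_exp lam n). lam * (\<Sum>i<n. x i) \<le> real n * exp (- \<eta> / 2)}"

definition weighted_mean_high :: "real \<Rightarrow> real \<Rightarrow> (nat \<Rightarrow> real) \<Rightarrow> nat \<Rightarrow> (nat \<Rightarrow> real) set" where
  "weighted_mean_high \<theta> lam \<alpha> n = {x \<in> space (P_exp lam n).
     exp (\<theta> / 2 + euler_mascheroni * (real n * Max (\<alpha> ` {..<n}) - 1) / 2) \<le> lam * (\<Sum>i<n. \<alpha> i * x i)}"

definition weighted_log_low :: "real \<Rightarrow> real \<Rightarrow> (nat \<Rightarrow> real) \<Rightarrow> nat \<Rightarrow> (nat \<Rightarrow> real) set" where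
  "weighted_log_low \<theta> lam \<alpha> n = {x \<in> space (P_exp lam n). (\<forall>i<n. 0 < x i) \<and>
     (\<Sum>i<n. \<alpha> i * ln (x i)) \<le> - \<theta> / 2 - euler_mascheroni * (real n * Max (\<alpha> ` {..<n}) + 1) / 2 - ln lam}"

text \<open>Chernoff bound for \<open>geo_mean_high\<close> at an exponent \<open>\<sigma> > 0\<close> with
  \<open>\<Gamma>(1 + \<sigma>) \<le> exp ((-\<gamma> + \<eta>/4) \<sigma>)\<close>, using \<open>E[X powr \<sigma>] = \<Gamma>(1 + \<sigma>) / \<lambda> powr \<sigma>\<close>.\<close>
lemma geo_mean_high_bound:
  fixes \<eta> \<sigma> lam :: real and n :: nat
  assumes lam: "lam > 0" and \<sigma>: "\<sigma> > 0" "Gamma (1 + \<sigma>) \<le> exp ((- euler_mascheroni + \<eta> / 4) * \<sigma>)"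
  shows "measure (P_exp lam n) (geo_mean_high \<eta> lam n) \<le> exp (- (\<sigma> * \<eta> / 4) * n)"
proof -
  define g where "g = \<sigma> * ((- euler_mascheroni + \<eta> / 4) - ln lam)"
  define v where "v = n * \<sigma> * (\<eta> / 2 - euler_mascheroni - ln lam)"
  have moment: "0 \<le> Gamma (\<sigma> + 1) / lam powr \<sigma> \<and> Gamma (\<sigma> + 1) / lam powr \<sigma> \<le> exp g"
    unfolding g_def using \<sigma> by (intro exp_density_powr_moment_le[OF lam]) auto
  have event: "geo_mean_high \<eta> lam n \<subseteq> {x \<in> space (P_exp lam n). exp v \<le> (\<Prod>i<n. x i powr \<sigma>)}"
  proof safe
    fix x assume "x \<in> geo_mean_high \<eta> lam n"
    hence x: "\<forall>i<n. 0 < x i" "real n * (\<eta> / 2 - euler_mascheroni - ln lam) \<le> (\<Sum>i<n. ln (x i))"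
      by (auto simp: geo_mean_high_def)
    have "(\<Prod>i<n. x i powr \<sigma>) = exp (\<sigma> * (\<Sum>i<n. ln (x i)))"
      using prod_powr_eq_exp_sum[of n x "\<lambda>_. \<sigma>"] x(1) by (simp add: sum_distrib_left)
    thus "exp v \<le> (\<Prod>i<n. x i powr \<sigma>)" using x(2) \<sigma> by (simp add: v_def mult.assoc)
  qed (auto simp: geo_mean_high_def)
  have "measure (P_exp lam n) (geo_mean_high \<eta> lam n) \<le> (\<Prod>i<n. Gamma (\<sigma> + 1) / lam powr \<sigma>) / exp v"
    by (rule P_exp_prod_tail[OF lam exp_gt_zero, where f = "\<lambda>_ t. t powr \<sigma>", OF _ _ _ _ event])
       (use \<sigma> lam in \<open>auto simp: nn_integral_exp_density_powr\<close>)
  also have "\<dots> \<le> exp (- (\<sigma> * \<eta> / 4) * n)"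
  proof (rule div_exp_le_exp)
    show "(\<Prod>i<n. Gamma (\<sigma> + 1) / lam powr \<sigma>) \<le> exp (\<Sum>i<n. g)"
      using moment by (intro prod_le_exp_sum) auto
    show "(\<Sum>i<n. g) - v \<le> - (\<sigma> * \<eta> / 4) * n" by (simp add: g_def v_def algebra_simps)
  qed
  finally show ?thesis .
qed

lemma geo_mean_high_tail:
  assumes \<eta>: "\<eta> > 0"
  shows "\<exists>r>0. \<forall>n lam. lam > 0 \<longrightarrow> measure (P_exp lam n) (geo_mean_high \<eta> lam n) \<le> exp (- r * n)"
proof -
  obtain \<sigma> where \<sigma>: "\<sigma> > 0" "Gamma (1 + \<sigma>) \<le> exp ((- euler_mascheroni + \<eta> / 4) * \<sigma>)"
    using Gamma_right_of_one[of "\<eta> / 4"] \<eta> by auto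
  thus ?thesis using geo_mean_high_bound[OF _ \<sigma>] \<sigma> \<eta> by (intro exI[of _ "\<sigma> * \<eta> / 4"]) auto
qed

text \<open>Chernoff bound for \<open>arith_mean_low\<close> with \<open>E[exp (-\<tau> \<lambda> X)] = 1 / (1 + \<tau>)\<close>, at a
  \<open>\<tau> > 0\<close> with \<open>exp (\<tau> \<beta>) / (1 + \<tau>) \<le> exp (-(1 - \<beta>) \<tau> / 2)\<close>, where \<open>\<beta> = exp (-\<eta>/2)\<close>.\<close>
lemma arith_mean_low_bound:
  fixes \<eta> \<tau> lam :: real and n :: nat
  defines "\<beta> \<equiv> exp (- \<eta> / 2)"
  assumes lam: "lam > 0" and \<tau>: "\<tau> > 0" "exp (\<tau> * \<beta>) / (1 + \<tau>) \<le> exp (- ((1 - \<beta>) / 2) * \<tau>)"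
  shows "measure (P_exp lam n) (arith_mean_low \<eta> lam n) \<le> exp (- (\<tau> * (1 - \<beta>) / 2) * n)"
proof -
  define g where "g = - (\<tau> * \<beta>) - ((1 - \<beta>) / 2) * \<tau>"
  have mgf: "(\<integral>\<^sup>+t. exp_density lam t * ennreal (exp (- \<tau> * lam * t)) \<partial>lborel) = ennreal (1 / (1 + \<tau>))"
    if "i < n" for i
    using nn_integral_exp_density_exp_scaled[OF lam, of "- \<tau>"] \<tau> by simp
  have "1 / (1 + \<tau>) = exp (\<tau> * \<beta>) / (1 + \<tau>) * exp (- (\<tau> * \<beta>))"
    by (simp add: exp_minus field_simps)
  also have "\<dots> \<le> exp (- ((1 - \<beta>) / 2) * \<tau>) * exp (- (\<tau> * \<beta>))"
    using \<tau> by (intro mult_right_mono) auto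
  also have "\<dots> = exp g" by (simp add: g_def exp_add[symmetric])
  finally have moment: "1 / (1 + \<tau>) \<le> exp g" .
  have event: "arith_mean_low \<eta> lam n
      \<subseteq> {x \<in> space (P_exp lam n). exp (- (\<tau> * n * \<beta>)) \<le> (\<Prod>i<n. exp (- \<tau> * lam * x i))}"
  proof safe
    fix x assume "x \<in> arith_mean_low \<eta> lam n"
    hence "lam * (\<Sum>i<n. x i) \<le> real n * \<beta>" by (simp add: arith_mean_low_def \<beta>_def)
    hence "- (\<tau> * n * \<beta>) \<le> - \<tau> * lam * (\<Sum>i<n. x i)"
      using \<tau> mult_left_mono[of _ _ \<tau>] by (simp add: algebra_simps)
    thus "exp (- (\<tau> * n * \<beta>)) \<le> (\<Prod>i<n. exp (- \<tau> * lam * x i))"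
      by (simp add: exp_sum[symmetric] sum_distrib_left)
  qed (auto simp: arith_mean_low_def)
  have "measure (P_exp lam n) (arith_mean_low \<eta> lam n) \<le> (\<Prod>i<n. 1 / (1 + \<tau>)) / exp (- (\<tau> * n * \<beta>))"
    by (rule P_exp_prod_tail[OF lam exp_gt_zero _ _ mgf _ event]) (use \<tau> in auto)
  also have "\<dots> \<le> exp (- (\<tau> * (1 - \<beta>) / 2) * n)"
  proof (rule div_exp_le_exp)
    show "(\<Prod>i<n. 1 / (1 + \<tau>)) \<le> exp (\<Sum>i<n. g)"
      using moment \<tau> by (intro prod_le_exp_sum) auto
    show "(\<Sum>i<n. g) - - (\<tau> * n * \<beta>) \<le> - (\<tau> * (1 - \<beta>) / 2) * n" by (simp add: g_def algebra_simps)
  qed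
  finally show ?thesis .
qed

lemma arith_mean_low_tail:
  assumes \<eta>: "\<eta> > 0"
  shows "\<exists>r>0. \<forall>n lam. lam > 0 \<longrightarrow> measure (P_exp lam n) (arith_mean_low \<eta> lam n) \<le> exp (- r * n)"
proof -
  define \<beta> where "\<beta> = exp (- \<eta> / 2)"
  have \<beta>: "0 < \<beta>" "\<beta> < 1" unfolding \<beta>_def using \<eta> by auto
  obtain \<tau> where \<tau>: "\<tau> > 0" "exp (\<tau> * \<beta>) / (1 + \<tau>) \<le> exp (- ((1 - \<beta>) / 2) * \<tau>)"
    using exp_over_one_plus_small[OF \<beta>] by auto
  thus ?thesis using arith_mean_low_bound[OF _ \<tau>[unfolded \<beta>_def]] \<tau> \<beta>
    by (intro exI[of _ "\<tau> * (1 - \<beta>) / 2"]) (auto simp: \<beta>_def)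
qed

text \<open>Rate arithmetic for the weighted-mean tail: since \<open>(1 + 2\<delta>) exp y \<ge> 1 + 2\<delta> + y\<close> for
  \<open>y = \<gamma> (M - 1) / 2 \<ge> 0\<close>, the Chernoff exponent \<open>s (1 + \<delta>) - s (1 + 2\<delta>) exp y\<close> is at most
  \<open>-s (\<delta> + y)\<close>, which \<open>spread_rate\<close> turns into a rate linear in \<open>n\<close>.\<close>
lemma weighted_mean_rate:
  fixes s \<delta> \<tau> \<theta> M :: real and n :: nat
  assumes s: "s > 0" and \<delta>: "\<delta> > 0" and M: "M \<ge> 1" and sM: "s * M = \<tau> * n"
    and \<theta>: "exp (\<theta> / 2) = 1 + 2 * \<delta>"
  shows "s * (1 + \<delta>) - s * exp (\<theta> / 2 + euler_mascheroni * (M - 1) / 2)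
      \<le> - (\<tau> * min \<delta> (euler_mascheroni / 2)) * n"
proof -
  define y where "y = euler_mascheroni * (M - 1) / 2"
  have y: "y \<ge> 0" using M euler_mascheroni_pos by (simp add: y_def)
  have "exp (\<theta> / 2 + y) = (1 + 2 * \<delta>) * exp y" using \<theta> by (simp add: exp_add)
  also have "\<dots> \<ge> (1 + 2 * \<delta>) * (1 + y)" using \<delta> by (intro mult_left_mono exp_ge_add_one_self) auto
  also have "(1 + 2 * \<delta>) * (1 + y) = 1 + 2 * \<delta> + y + 2 * \<delta> * y" by (simp add: algebra_simps)
  also have "\<dots> \<ge> 1 + 2 * \<delta> + y" using \<delta> y by simp
  finally have "s * (1 + 2 * \<delta> + y) \<le> s * exp (\<theta> / 2 + y)" using s by (intro mult_left_mono) auto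
  hence "s * (1 + \<delta>) - s * exp (\<theta> / 2 + y) \<le> - (s * (\<delta> + y))" by (simp add: algebra_simps)
  also have "\<dots> \<le> - (\<tau> * min \<delta> (euler_mascheroni / 2)) * n"
    unfolding y_def by (rule spread_rate[OF s \<delta> M sM])
  finally show ?thesis by (simp add: y_def)
qed

text \<open>Chernoff bound for \<open>weighted_mean_high\<close> with \<open>E[exp (s \<lambda> \<alpha> X)] = 1 / (1 - s \<alpha>) \<le> exp (s \<alpha> (1 + \<delta>))\<close>
  for \<open>s \<alpha> \<le> \<tau> = \<delta> / (1 + \<delta>)\<close>, where \<open>exp (\<theta>/2) = 1 + 2\<delta>\<close> and \<open>s = \<tau> n / M\<close>.\<close>
lemma weighted_mean_high_bound:
  fixes \<theta> lam :: real and \<alpha> :: "nat \<Rightarrow> real" and n :: nat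
  defines "\<delta> \<equiv> (exp (\<theta> / 2) - 1) / 2"
  defines "\<tau> \<equiv> \<delta> / (1 + \<delta>)"
  assumes \<theta>: "\<theta> > 0" and lam: "lam > 0"
    and \<alpha>_pos: "\<And>i. i < n \<Longrightarrow> \<alpha> i > 0" and \<alpha>_sum: "(\<Sum>i<n. \<alpha> i) = 1"
  shows "measure (P_exp lam n) (weighted_mean_high \<theta> lam \<alpha> n) \<le> exp (- (\<tau> * min \<delta> (euler_mascheroni / 2)) * n)"
proof -
  have \<delta>: "\<delta> > 0" unfolding \<delta>_def using \<theta> by simp
  have \<tau>: "0 < \<tau>" "\<tau> < 1" "1 - \<tau> = 1 / (1 + \<delta>)" using \<delta> unfolding \<tau>_def by (auto simp: field_simps)
  define M where "M = real n * Max (\<alpha> ` {..<n})"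
  define s where "s = \<tau> * n / M"
  define v where "v = s * exp (\<theta> / 2 + euler_mascheroni * (M - 1) / 2)"
  have M: "M \<ge> 1" unfolding M_def by (rule weights_max_ge[OF \<alpha>_sum])
  have s: "s > 0" "s * M = \<tau> * n" "\<And>i. i < n \<Longrightarrow> 0 \<le> s * \<alpha> i \<and> s * \<alpha> i \<le> \<tau>"
    using scaled_weights[OF \<alpha>_pos \<alpha>_sum \<tau>(1)] unfolding s_def M_def by auto
  have moment: "0 \<le> 1 / (1 - s * \<alpha> i) \<and> 1 / (1 - s * \<alpha> i) \<le> exp (s * \<alpha> i * (1 + \<delta>))"
    and mgf: "(\<integral>\<^sup>+t. exp_density lam t * ennreal (exp (s * \<alpha> i * lam * t)) \<partial>lborel) = ennreal (1 / (1 - s * \<alpha> i))"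
    if i: "i < n" for i
  proof -
    have "s * \<alpha> i < 1" using s(3)[OF i] \<tau> by linarith
    thus "(\<integral>\<^sup>+t. exp_density lam t * ennreal (exp (s * \<alpha> i * lam * t)) \<partial>lborel) = ennreal (1 / (1 - s * \<alpha> i))"
      by (rule nn_integral_exp_density_exp_scaled[OF lam])
    show "0 \<le> 1 / (1 - s * \<alpha> i) \<and> 1 / (1 - s * \<alpha> i) \<le> exp (s * \<alpha> i * (1 + \<delta>))"
      using inverse_one_minus_le_exp[of "s * \<alpha> i" \<tau>] s(3)[OF i] \<tau> by simp
  qed
  have event: "weighted_mean_high \<theta> lam \<alpha> n
      \<subseteq> {x \<in> space (P_exp lam n). exp v \<le> (\<Prod>i<n. exp (s * \<alpha> i * lam * x i))}"
  proof safe
    fix x assume "x \<in> weighted_mean_high \<theta> lam \<alpha> n"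
    hence "exp (\<theta> / 2 + euler_mascheroni * (M - 1) / 2) \<le> lam * (\<Sum>i<n. \<alpha> i * x i)"
      by (simp add: weighted_mean_high_def M_def)
    hence "v \<le> s * (lam * (\<Sum>i<n. \<alpha> i * x i))"
      unfolding v_def using s(1) by (intro mult_left_mono) auto
    also have "\<dots> = (\<Sum>i<n. s * \<alpha> i * lam * x i)" by (simp add: sum_distrib_left mult_ac)
    finally show "exp v \<le> (\<Prod>i<n. exp (s * \<alpha> i * lam * x i))" by (simp add: exp_sum[symmetric])
  qed (auto simp: weighted_mean_high_def)
  have "measure (P_exp lam n) (weighted_mean_high \<theta> lam \<alpha> n) \<le> (\<Prod>i<n. 1 / (1 - s * \<alpha> i)) / exp v"
    by (rule P_exp_prod_tail[OF lam exp_gt_zero _ _ mgf _ event]) (use moment in auto)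
  also have "\<dots> \<le> exp (- (\<tau> * min \<delta> (euler_mascheroni / 2)) * n)"
  proof (rule div_exp_le_exp)
    show "(\<Prod>i<n. 1 / (1 - s * \<alpha> i)) \<le> exp (\<Sum>i<n. s * \<alpha> i * (1 + \<delta>))"
      using moment by (intro prod_le_exp_sum) auto
    have "(\<Sum>i<n. s * \<alpha> i * (1 + \<delta>)) = s * (1 + \<delta>)"
      using \<alpha>_sum by (simp add: sum_distrib_left[symmetric] sum_distrib_right[symmetric])
    moreover have "exp (\<theta> / 2) = 1 + 2 * \<delta>" unfolding \<delta>_def by (simp add: field_simps)
    ultimately show "(\<Sum>i<n. s * \<alpha> i * (1 + \<delta>)) - v \<le> - (\<tau> * min \<delta> (euler_mascheroni / 2)) * n"
      unfolding v_def using weighted_mean_rate[OF s(1) \<delta> M s(2)] by simp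
  qed
  finally show ?thesis .
qed

lemma weighted_mean_high_tail:
  assumes \<theta>: "\<theta> > 0"
  shows "\<exists>r>0. \<forall>n lam \<alpha>. lam > 0 \<and> (\<forall>i<n. \<alpha> i > 0) \<and> (\<Sum>i<n. \<alpha> i) = 1 \<longrightarrow>
           measure (P_exp lam n) (weighted_mean_high \<theta> lam \<alpha> n) \<le> exp (- r * n)"
proof -
  define \<delta> where "\<delta> = (exp (\<theta> / 2) - 1) / 2"
  have "\<delta> > 0" unfolding \<delta>_def using \<theta> by simp
  hence "\<delta> / (1 + \<delta>) * min \<delta> (euler_mascheroni / 2) > 0" using euler_mascheroni_pos by simp
  thus ?thesis using weighted_mean_high_bound[OF \<theta>] unfolding \<delta>_def
    by (intro exI[of _ "\<delta> / (1 + \<delta>) * min \<delta> (euler_mascheroni / 2)"]) (auto simp: \<delta>_def)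
qed

text \<open>Chernoff bound for \<open>weighted_log_low\<close> with the moments
  \<open>E[X powr (-s \<alpha>)] = \<Gamma>(1 - s \<alpha>) \<lambda> powr (s \<alpha>) \<le> exp (s \<alpha> (\<gamma> + \<delta> + ln \<lambda>))\<close> for \<open>s \<alpha> \<le> \<sigma>\<close>,
  where \<open>\<delta> = \<theta>/4\<close> and \<open>s = \<sigma> n / M\<close>.\<close>
lemma weighted_log_low_bound:
  fixes \<theta> \<sigma> lam :: real and \<alpha> :: "nat \<Rightarrow> real" and n :: nat
  defines "\<delta> \<equiv> \<theta> / 4"
  assumes \<theta>: "\<theta> > 0"
    and \<sigma>: "0 < \<sigma>" "\<sigma> \<le> 1/2" "\<And>u. 0 \<le> u \<Longrightarrow> u \<le> \<sigma> \<Longrightarrow> Gamma (1 - u) \<le> exp ((euler_mascheroni + \<delta>) * u)"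
    and lam: "lam > 0" and \<alpha>_pos: "\<And>i. i < n \<Longrightarrow> \<alpha> i > 0" and \<alpha>_sum: "(\<Sum>i<n. \<alpha> i) = 1"
  shows "measure (P_exp lam n) (weighted_log_low \<theta> lam \<alpha> n) \<le> exp (- (\<sigma> * min \<delta> (euler_mascheroni / 2)) * n)"
proof -
  have \<delta>: "\<delta> > 0" unfolding \<delta>_def using \<theta> by simp
  define M where "M = real n * Max (\<alpha> ` {..<n})"
  define s where "s = \<sigma> * n / M"
  define v where "v = s * (\<theta> / 2 + euler_mascheroni * (M + 1) / 2 + ln lam)"
  have M: "M \<ge> 1" unfolding M_def by (rule weights_max_ge[OF \<alpha>_sum])
  have s: "s > 0" "s * M = \<sigma> * n" "\<And>i. i < n \<Longrightarrow> 0 \<le> s * \<alpha> i \<and> s * \<alpha> i \<le> \<sigma>"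
    using scaled_weights[OF \<alpha>_pos \<alpha>_sum \<sigma>(1)] unfolding s_def M_def by auto
  have moment: "0 \<le> Gamma (- (s * \<alpha> i) + 1) / lam powr (- (s * \<alpha> i)) \<and>
      Gamma (- (s * \<alpha> i) + 1) / lam powr (- (s * \<alpha> i)) \<le> exp (- (s * \<alpha> i) * (- (euler_mascheroni + \<delta>) - ln lam))"
    if i: "i < n" for i
    using \<sigma>(2) \<sigma>(3)[of "s * \<alpha> i"] s(3)[OF i]
    by (intro exp_density_powr_moment_le[OF lam]) (auto simp: algebra_simps)
  have powr_moment: "(\<integral>\<^sup>+t. exp_density lam t * ennreal (t powr (- (s * \<alpha> i))) \<partial>lborel)
      = ennreal (Gamma (- (s * \<alpha> i) + 1) / lam powr (- (s * \<alpha> i)))" if i: "i < n" for i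
    using s(3)[OF i] \<sigma>(2) by (intro nn_integral_exp_density_powr[OF _ lam]) auto
  have event: "weighted_log_low \<theta> lam \<alpha> n
      \<subseteq> {x \<in> space (P_exp lam n). exp v \<le> (\<Prod>i<n. x i powr (- (s * \<alpha> i)))}"
  proof safe
    fix x assume "x \<in> weighted_log_low \<theta> lam \<alpha> n"
    hence x: "\<forall>i<n. 0 < x i"
      "(\<Sum>i<n. \<alpha> i * ln (x i)) \<le> - \<theta> / 2 - euler_mascheroni * (M + 1) / 2 - ln lam"
      by (auto simp: weighted_log_low_def M_def)
    have "(\<Prod>i<n. x i powr (- (s * \<alpha> i))) = exp (- s * (\<Sum>i<n. \<alpha> i * ln (x i)))"
      using prod_powr_eq_exp_sum[of n x "\<lambda>i. - (s * \<alpha> i)"] x(1) by (simp add: sum_distrib_left sum_negf algebra_simps)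
    moreover have "s * (\<Sum>i<n. \<alpha> i * ln (x i)) \<le> s * (- \<theta> / 2 - euler_mascheroni * (M + 1) / 2 - ln lam)"
      using x(2) s(1) by (intro mult_left_mono) auto
    hence "v \<le> - s * (\<Sum>i<n. \<alpha> i * ln (x i))" by (simp add: v_def algebra_simps)
    ultimately show "exp v \<le> (\<Prod>i<n. x i powr (- (s * \<alpha> i)))" by simp
  qed (auto simp: weighted_log_low_def)
  have "measure (P_exp lam n) (weighted_log_low \<theta> lam \<alpha> n)
      \<le> (\<Prod>i<n. Gamma (- (s * \<alpha> i) + 1) / lam powr (- (s * \<alpha> i))) / exp v"
    by (rule P_exp_prod_tail[OF lam exp_gt_zero _ _ powr_moment _ event]) (use moment in auto)
  also have "\<dots> \<le> exp (- (\<sigma> * min \<delta> (euler_mascheroni / 2)) * n)"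
  proof (rule div_exp_le_exp)
    show "(\<Prod>i<n. Gamma (- (s * \<alpha> i) + 1) / lam powr (- (s * \<alpha> i)))
        \<le> exp (\<Sum>i<n. - (s * \<alpha> i) * (- (euler_mascheroni + \<delta>) - ln lam))"
      using moment by (intro prod_le_exp_sum) auto
    have "(\<Sum>i<n. - (s * \<alpha> i) * (- (euler_mascheroni + \<delta>) - ln lam))
        = (\<Sum>i<n. \<alpha> i) * (s * (euler_mascheroni + \<delta> + ln lam))"
      unfolding sum_distrib_right by (intro sum.cong) (simp_all add: algebra_simps)
    hence "(\<Sum>i<n. - (s * \<alpha> i) * (- (euler_mascheroni + \<delta>) - ln lam)) = s * (euler_mascheroni + \<delta> + ln lam)"
      using \<alpha>_sum by simp
    hence "(\<Sum>i<n. - (s * \<alpha> i) * (- (euler_mascheroni + \<delta>) - ln lam)) - v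
        = s * (euler_mascheroni + \<delta> + ln lam) - s * (\<theta> / 2 + euler_mascheroni * (M + 1) / 2 + ln lam)"
      by (simp add: v_def)
    also have "\<dots> = - (s * (\<delta> + euler_mascheroni * (M - 1) / 2))" by (simp add: \<delta>_def field_simps)
    also have "\<dots> \<le> - (\<sigma> * min \<delta> (euler_mascheroni / 2)) * n" by (rule spread_rate[OF s(1) \<delta> M s(2)])
    finally show "(\<Sum>i<n. - (s * \<alpha> i) * (- (euler_mascheroni + \<delta>) - ln lam)) - v
        \<le> - (\<sigma> * min \<delta> (euler_mascheroni / 2)) * n" .
  qed
  finally show ?thesis .
qed

lemma weighted_log_low_tail:
  assumes \<theta>: "\<theta> > 0"
  shows "\<exists>r>0. \<forall>n lam \<alpha>. lam > 0 \<and> (\<forall>i<n. \<alpha> i > 0) \<and> (\<Sum>i<n. \<alpha> i) = 1 \<longrightarrow>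
           measure (P_exp lam n) (weighted_log_low \<theta> lam \<alpha> n) \<le> exp (- r * n)"
proof -
  have \<delta>: "\<theta> / 4 > 0" using \<theta> by simp
  obtain \<sigma> where \<sigma>: "0 < \<sigma>" "\<sigma> \<le> 1/2" "\<And>u. 0 \<le> u \<Longrightarrow> u \<le> \<sigma> \<Longrightarrow> Gamma (1 - u) \<le> exp ((euler_mascheroni + \<theta> / 4) * u)"
    using Gamma_left_of_one[OF \<delta>] by auto
  thus ?thesis using weighted_log_low_bound[OF \<theta> \<sigma>] \<delta> euler_mascheroni_pos
    by (intro exI[of _ "\<sigma> * min (\<theta> / 4) (euler_mascheroni / 2)"]) auto
qed

lemma ratio_window_outside_events:
  fixes x \<alpha> :: "nat \<Rightarrow> real" and lam e \<epsilon> :: real and n :: nat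
  assumes n: "n > 0" and \<alpha>_pos: "\<And>i. i < n \<Longrightarrow> \<alpha> i > 0" and \<alpha>_sum: "(\<Sum>i<n. \<alpha> i) = 1"
    and lam: "lam > 0" and e: "0 < e" "e < 1" "e \<le> \<epsilon>"
    and x_pos: "\<forall>i<n. 0 < x i" and x: "x \<in> space (P_exp lam n)"
    and not_geo: "x \<notin> geo_mean_high (ln (1 + e)) lam n"
    and not_arith: "x \<notin> arith_mean_low (ln (1 + e)) lam n"
    and not_wmean: "x \<notin> weighted_mean_high (- ln (1 - e)) lam \<alpha> n"
    and not_wlog: "x \<notin> weighted_log_low (- ln (1 - e)) lam \<alpha> n"
  shows "(1 - \<epsilon>) * exp (- real n * Max (\<alpha> ` {..<n}) * euler_mascheroni)
           < (\<Prod>i<n. x i powr \<alpha> i) / (\<Sum>i<n. \<alpha> i * x i) \<and>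
         (\<Prod>i<n. x i powr \<alpha> i) / (\<Sum>i<n. \<alpha> i * x i)
           < (1 + \<epsilon>) * exp (- real n * Min (\<alpha> ` {..<n}) * euler_mascheroni)"
proof
  have "(1 - \<epsilon>) * exp (- real n * Max (\<alpha> ` {..<n}) * euler_mascheroni)
      \<le> exp (- (- ln (1 - e))) * exp (- real n * Max (\<alpha> ` {..<n}) * euler_mascheroni)"
    using e by (intro mult_right_mono) auto
  also have "\<dots> < (\<Prod>i<n. x i powr \<alpha> i) / (\<Sum>i<n. \<alpha> i * x i)"
    using not_wmean not_wlog x x_pos
    by (intro ratio_lower_bound[OF n \<alpha>_pos _ lam]) (auto simp: weighted_mean_high_def weighted_log_low_def)
  finally show "(1 - \<epsilon>) * exp (- real n * Max (\<alpha> ` {..<n}) * euler_mascheroni)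
      < (\<Prod>i<n. x i powr \<alpha> i) / (\<Sum>i<n. \<alpha> i * x i)" .
  have "(\<Prod>i<n. x i powr \<alpha> i) / (\<Sum>i<n. \<alpha> i * x i)
      < exp (ln (1 + e)) * exp (- real n * Min (\<alpha> ` {..<n}) * euler_mascheroni)"
    using not_geo not_arith x x_pos e
    by (intro ratio_upper_bound[OF n \<alpha>_pos _ \<alpha>_sum lam]) (auto simp: geo_mean_high_def arith_mean_low_def)
  also have "\<dots> \<le> (1 + \<epsilon>) * exp (- real n * Min (\<alpha> ` {..<n}) * euler_mascheroni)"
    using e by (intro mult_right_mono) auto
  finally show "(\<Prod>i<n. x i powr \<alpha> i) / (\<Sum>i<n. \<alpha> i * x i)
      < (1 + \<epsilon>) * exp (- real n * Min (\<alpha> ` {..<n}) * euler_mascheroni)" .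
qed

lemma ratio_window_measure:
  fixes \<alpha> :: "nat \<Rightarrow> real" and lam e \<epsilon> :: real and n :: nat
  assumes n: "n > 0" and \<alpha>_pos: "\<And>i. i < n \<Longrightarrow> \<alpha> i > 0" and \<alpha>_sum: "(\<Sum>i<n. \<alpha> i) = 1"
    and lam: "lam > 0" and e: "0 < e" "e < 1" "e \<le> \<epsilon>"
  shows "measure (P_exp lam n)
           {x \<in> space (P_exp lam n).
              (1 - \<epsilon>) * exp (- real n * Max (\<alpha> ` {..<n}) * euler_mascheroni)
                < (\<Prod>i<n. x i powr \<alpha> i) / (\<Sum>i<n. \<alpha> i * x i) \<and>
              (\<Prod>i<n. x i powr \<alpha> i) / (\<Sum>i<n. \<alpha> i * x i)
                < (1 + \<epsilon>) * exp (- real n * Min (\<alpha> ` {..<n}) * euler_mascheroni)}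
       \<ge> 1 - (measure (P_exp lam n) (geo_mean_high (ln (1 + e)) lam n)
              + measure (P_exp lam n) (arith_mean_low (ln (1 + e)) lam n)
              + measure (P_exp lam n) (weighted_mean_high (- ln (1 - e)) lam \<alpha> n)
              + measure (P_exp lam n) (weighted_log_low (- ln (1 - e)) lam \<alpha> n))"
    (is "measure ?P ?G \<ge> 1 - (measure ?P ?E1 + measure ?P ?E2 + measure ?P ?E3 + measure ?P ?E4)")
proof -
  define E0 where "E0 = {x \<in> space ?P. \<exists>i<n. x i \<le> 0}"
  interpret finite_measure ?P by (rule finite_measure_P_exp[OF lam])
  have sets: "?G \<in> sets ?P" "E0 \<in> sets ?P" "?E1 \<in> sets ?P" "?E2 \<in> sets ?P" "?E3 \<in> sets ?P" "?E4 \<in> sets ?P"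
    unfolding E0_def geo_mean_high_def arith_mean_low_def weighted_mean_high_def weighted_log_low_def
    by measurable
  have "space ?P - ?G \<subseteq> E0 \<union> ?E1 \<union> ?E2 \<union> ?E3 \<union> ?E4"
    using ratio_window_outside_events[OF n \<alpha>_pos \<alpha>_sum lam e] by (auto simp: E0_def not_le)
  hence "measure ?P (space ?P - ?G) \<le> measure ?P (E0 \<union> ?E1 \<union> ?E2 \<union> ?E3 \<union> ?E4)"
    using sets by (intro finite_measure_mono) auto
  also have "\<dots> \<le> measure ?P E0 + measure ?P ?E1 + measure ?P ?E2 + measure ?P ?E3 + measure ?P ?E4"
    using sets by (intro order.trans[OF measure_Un_le] add_right_mono) auto
  also have "measure ?P E0 = 0" unfolding E0_def by (rule P_exp_nonpos_null[OF lam])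
  finally show ?thesis
    using finite_measure_compl[OF sets(1)] emeasure_space_P_exp[OF lam]
    by (simp add: measure_def)
qed

lemma deviation_events_small:
  assumes e: "0 < e" "e < 1"
  shows "\<exists>\<kappa>>0. \<forall>n lam \<alpha>. lam > 0 \<and> (\<forall>i<n. \<alpha> i > 0) \<and> (\<Sum>i<n. \<alpha> i) = 1 \<longrightarrow>
           measure (P_exp lam n) (geo_mean_high (ln (1 + e)) lam n)
           + measure (P_exp lam n) (arith_mean_low (ln (1 + e)) lam n)
           + measure (P_exp lam n) (weighted_mean_high (- ln (1 - e)) lam \<alpha> n)
           + measure (P_exp lam n) (weighted_log_low (- ln (1 - e)) lam \<alpha> n) \<le> 4 * exp (- \<kappa> * n)"
proof -
  have \<eta>: "ln (1 + e) > 0" and \<theta>: "- ln (1 - e) > 0" using e by auto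
  obtain r1 r2 r3 r4 where r: "r1 > 0" "r2 > 0" "r3 > 0" "r4 > 0"
    and tails: "\<And>n lam \<alpha>. lam > 0 \<Longrightarrow> (\<forall>i<n. \<alpha> i > 0) \<Longrightarrow> (\<Sum>i<n. \<alpha> i) = 1 \<Longrightarrow>
        measure (P_exp lam n) (geo_mean_high (ln (1 + e)) lam n) \<le> exp (- r1 * n) \<and>
        measure (P_exp lam n) (arith_mean_low (ln (1 + e)) lam n) \<le> exp (- r2 * n) \<and>
        measure (P_exp lam n) (weighted_mean_high (- ln (1 - e)) lam \<alpha> n) \<le> exp (- r3 * n) \<and>
        measure (P_exp lam n) (weighted_log_low (- ln (1 - e)) lam \<alpha> n) \<le> exp (- r4 * n)"
    using geo_mean_high_tail[OF \<eta>] arith_mean_low_tail[OF \<eta>]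
          weighted_mean_high_tail[OF \<theta>] weighted_log_low_tail[OF \<theta>] by metis
  define \<kappa> where "\<kappa> = min (min r1 r2) (min r3 r4)"
  have rate: "exp (- r * real n) \<le> exp (- \<kappa> * real n)" if "\<kappa> \<le> r" for r n
    using that by (intro exp_mono mult_right_mono) auto
  have rates: "\<kappa> \<le> r1" "\<kappa> \<le> r2" "\<kappa> \<le> r3" "\<kappa> \<le> r4" by (auto simp: \<kappa>_def)
  have "measure (P_exp lam n) (geo_mean_high (ln (1 + e)) lam n)
      + measure (P_exp lam n) (arith_mean_low (ln (1 + e)) lam n)
      + measure (P_exp lam n) (weighted_mean_high (- ln (1 - e)) lam \<alpha> n)
      + measure (P_exp lam n) (weighted_log_low (- ln (1 - e)) lam \<alpha> n) \<le> 4 * exp (- \<kappa> * n)"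
    if "lam > 0" "\<forall>i<n. \<alpha> i > 0" "(\<Sum>i<n. \<alpha> i) = 1" for n lam \<alpha>
    using tails[OF that] rate[OF rates(1), of n] rate[OF rates(2), of n] rate[OF rates(3), of n]
          rate[OF rates(4), of n]
    by (elim conjE) linarith
  moreover have "\<kappa> > 0" using r by (simp add: \<kappa>_def)
  ultimately show ?thesis by blast
qed

theorem theorem4p4:
  fixes k \<epsilon> :: real
  assumes "k > 0" and "\<epsilon> > 0"
  shows "\<exists>N::nat. \<forall>n\<ge>N. n \<ge> 2 \<longrightarrow>
    (\<forall>(lam::real) (\<alpha>::nat \<Rightarrow> real).
       lam > 0 \<and> (\<forall>i<n. \<alpha> i > 0) \<and> (\<Sum>i<n. \<alpha> i) = 1 \<longrightarrow>
       measure (P_exp lam n)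
         {x \<in> space (P_exp lam n).
            (1 - \<epsilon>) * exp (- real n * Max (\<alpha> ` {..<n}) * euler_mascheroni)
              < (\<Prod>i<n. x i powr \<alpha> i) / (\<Sum>i<n. \<alpha> i * x i) \<and>
            (\<Prod>i<n. x i powr \<alpha> i) / (\<Sum>i<n. \<alpha> i * x i)
              < (1 + \<epsilon>) * exp (- real n * Min (\<alpha> ` {..<n}) * euler_mascheroni)}
       \<ge> 1 - 1 / real n powr k)"
proof -
  define e where "e = min \<epsilon> (1/2)"
  have e: "0 < e" "e < 1" "e \<le> \<epsilon>" using assms(2) by (auto simp: e_def)
  obtain \<kappa> where \<kappa>: "\<kappa> > 0" and deviations: "\<And>n lam \<alpha>. lam > 0 \<and> (\<forall>i<n. \<alpha> i > 0) \<and> (\<Sum>i<n. \<alpha> i) = 1 \<Longrightarrow>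
      measure (P_exp lam n) (geo_mean_high (ln (1 + e)) lam n)
      + measure (P_exp lam n) (arith_mean_low (ln (1 + e)) lam n)
      + measure (P_exp lam n) (weighted_mean_high (- ln (1 - e)) lam \<alpha> n)
      + measure (P_exp lam n) (weighted_log_low (- ln (1 - e)) lam \<alpha> n) \<le> 4 * exp (- \<kappa> * n)"
    using deviation_events_small[OF e(1,2)] by blast
  have "eventually (\<lambda>n::nat. 4 * exp (- \<kappa> * n) \<le> 1 / real n powr k) at_top"
    using \<kappa> assms(1) by real_asymp
  then obtain N where N: "\<And>n. n \<ge> N \<Longrightarrow> 4 * exp (- \<kappa> * real n) \<le> 1 / real n powr k"
    by (auto simp: eventually_at_top_linorder)
  show ?thesis
  proof (intro exI[of _ N] allI impI)
    fix n :: nat and lam :: real and \<alpha> :: "nat \<Rightarrow> real"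
    assume n: "N \<le> n" "2 \<le> n" and H: "lam > 0 \<and> (\<forall>i<n. \<alpha> i > 0) \<and> (\<Sum>i<n. \<alpha> i) = 1"
    show "measure (P_exp lam n) {x \<in> space (P_exp lam n).
            (1 - \<epsilon>) * exp (- real n * Max (\<alpha> ` {..<n}) * euler_mascheroni)
              < (\<Prod>i<n. x i powr \<alpha> i) / (\<Sum>i<n. \<alpha> i * x i) \<and>
            (\<Prod>i<n. x i powr \<alpha> i) / (\<Sum>i<n. \<alpha> i * x i)
              < (1 + \<epsilon>) * exp (- real n * Min (\<alpha> ` {..<n}) * euler_mascheroni)}
          \<ge> 1 - 1 / real n powr k"
      using ratio_window_measure[of n \<alpha> lam e \<epsilon>] deviations[OF H] N[OF n(1)] n(2) H e by auto
  qed
qed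

end
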